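(* Let $s\in(0,2]$, $P$ a finite set of $n$ points in $(\mathbb{R}^d,\ell_s)$, $\varepsilon>0$, and let $q\in\mathbb{R}^d$ be a query point processed by the reverse nearest neighbor query procedure described in the context, with $y$ the point found at step 1. Let $P'=\bigcup_i P_i$ for $i$ ranging from $\lfloor\log_{1+\varepsilon}\frac{\mathrm{d}(q,y)}{1+\varepsilon}\rfloor+1$ to $\lceil\log_{1+\varepsilon}\frac{\mathrm{d}(q,y)}{\varepsilon}\rceil$, and let $S'$ be the set of points inserted into $S$ at step 2. Then $\mathrm{RNN}_P(q)\cap P'\subseteq S'$ with high probability.
   Context: $\mathrm{d}$ is the $\ell_s$ distance; $\mathrm{d}(x,P)=\min\{\mathrm{d}(x,p):p\in P\setminus\{x\}\}$; $N_Q(x,R)$ is the set of $p\in Q\setminus\{x\}$ with $\mathrm{d}(x,p)\le R$; $\varepsilon\text{-}\mathrm{NN}_P(x)=N_P(x,(1+\varepsilon)\mathrm{d}(x,P))$; $\mathrm{RNN}_P(x)$ is the set of $p\in P\setminus\{x\}$ with $\mathrm{d}(p,x)\le\mathrm{d}(p,P)$; $\varepsilon\text{-}\mathrm{RNN}_P(x)$ is the set of $p\in P\setminus\{x\}$ with $\mathrm{d}(p,x)\le(1+\varepsilon)\mathrm{d}(p,P)$. Preprocessing: compute $\mathrm{d}(p,P)$ for all $p\in P$; bucket $P_i=\{p\in P:(1+\varepsilon)^{i-1}\le\mathrm{d}(p,P)<(1+\varepsilon)^i\}$, $i\in\mathbb{Z}$; on each nonempty $P_i$ build a locality-sensitive hashing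 structure for exhaustive $(1+\varepsilon)^i$-PLEB on $P_i$ (the lifted structure $\mathcal{A}'(P_i,(1+\varepsilon)^i,\varepsilon)$ built from $s$-stable hash functions) with $\lceil c\ln n\rceil$ independent repetitions, $c=3/\ln\frac52$, so that for each query it returns $N_{P_i}(q,(1+\varepsilon)^i)$ with probability at least $1-1/n^2$; for each $y\in P$ store the array $P_y=\varepsilon\text{-}\mathrm{RNN}_P(y)\cup\{y\}$ sorted by $\mathrm{d}(\cdot,P)$; build an $\varepsilon$-approximate nearest neighbor structure on $P$ (Har-Peled's tree of LSH structures). Query: (1) find $y\in P$ with the $\varepsilon$-NN structure (with probability at least $1-1/n$, $y\in\varepsilon\text{-}\mathrm{NN}_P(q)$); (2) for each $i$ from $\lfloor\log_{1+\varepsilon}\frac{\mathrm{d}(q,y)}{1+\varepsilon}\rfloor+1$ to $\lceil\log_{1+\varepsilon}\frac{\mathrm{d}(q,y)}{\varepsilon}\rceil$ with $P_i\neq\emptyset$, run the exhaustive $(1+\varepsilon)^i$-PLEB query on $P_i$ and put the outputs into $S$; (3) add to $S$ the points $p\in P_y$ with $\mathrm{d}(p,P)\ge\mathrm{d}(q,y)/\varepsilon$; (4) remove from $S$ the points $p$ with $\mathrm{d}(p,q)>\mathrm{d}(p,P)$; return $S$. "High probability" means probability at least $1-1/n$. *)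

theory Defs
  imports "HOL-Probability.Probability"
begin

definition ls_dist :: "real \<Rightarrow> real^'d \<Rightarrow> real^'d \<Rightarrow> real" where
  "ls_dist s x y = (\<Sum>i\<in>UNIV. \<bar>x$i - y$i\<bar> powr s) powr (1/s)"

definition dist_set :: "real \<Rightarrow> real^'d \<Rightarrow> (real^'d) set \<Rightarrow> real" where
  "dist_set s x P = Min ((\<lambda>p. ls_dist s x p) ` (P - {x}))"

definition nbhd :: "real \<Rightarrow> (real^'d) set \<Rightarrow> real^'d \<Rightarrow> real \<Rightarrow> (real^'d) set" where
  "nbhd s Q x R = {p \<in> Q - {x}. ls_dist s x p \<le> R}"

definition RNN :: "real \<Rightarrow> (real^'d) set \<Rightarrow> real^'d \<Rightarrow> (real^'d) set" where
  "RNN s P x = {p \<in> P - {x}. ls_dist s p x \<le> dist_set s p P}"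

definition bucket :: "real \<Rightarrow> (real^'d) set \<Rightarrow> real \<Rightarrow> int \<Rightarrow> (real^'d) set" where
  "bucket s P \<epsilon> i = {p \<in> P. (1+\<epsilon>) powr (real_of_int i - 1) \<le> dist_set s p P
                          \<and> dist_set s p P < (1+\<epsilon>) powr (real_of_int i)}"

text \<open>Index range of step 2, determined by r = d(q,y).\<close>
definition idx_range :: "real \<Rightarrow> real \<Rightarrow> int set" where
  "idx_range \<epsilon> r = {\<lfloor>log (1+\<epsilon>) (r/(1+\<epsilon>))\<rfloor> + 1 .. \<lceil>log (1+\<epsilon>) (r/\<epsilon>)\<rceil>}"

end

theory Submission
  imports Defs
begin

text \<open>Every point p of RNN(q) lying in a bucket P_i is within distance d(p,P) < (1+\<epsilon>)^i
  of q, so an exact PLEB answer on each nonempty bucket of the range catches all of them.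
  The only randomness is whether all these PLEB queries succeed; the buckets are pairwise
  disjoint, so at most n of them are nonempty, and a union bound over failure probabilities
  1/n^2 gives success probability at least 1 - 1/n.\<close>

lemma ls_dist_commute: "ls_dist s x y = ls_dist s y x"
  unfolding ls_dist_def by (simp add: abs_minus_commute)

lemma bucket_unique:
  assumes "0 < \<epsilon>" "p \<in> bucket s P \<epsilon> i" "p \<in> bucket s P \<epsilon> j"
  shows "i = j"
proof -
  have base: "1 < 1 + \<epsilon>" using assms(1) by simp
  from assms(2,3) have "(1+\<epsilon>) powr (real_of_int i - 1) < (1+\<epsilon>) powr real_of_int j"
    "(1+\<epsilon>) powr (real_of_int j - 1) < (1+\<epsilon>) powr real_of_int i"
    unfolding bucket_def by auto
  then have "real_of_int i - 1 < real_of_int j" "real_of_int j - 1 < real_of_int i"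
    using base by (simp_all add: powr_less_cancel_iff)
  then show ?thesis by linarith
qed

lemma nonempty_buckets_finite_card_le:
  assumes "0 < \<epsilon>" "finite P"
  shows "finite {i. bucket s P \<epsilon> i \<noteq> {}}" "card {i. bucket s P \<epsilon> i \<noteq> {}} \<le> card P"
proof -
  define I where "I = {i. bucket s P \<epsilon> i \<noteq> {}}"
  define rep where "rep i = (SOME p. p \<in> bucket s P \<epsilon> i)" for i
  have rep_in: "rep i \<in> bucket s P \<epsilon> i" if "i \<in> I" for i
    using that unfolding I_def rep_def by (auto intro: someI)
  have inj: "inj_on rep I"
    by (rule inj_onI) (metis rep_in bucket_unique assms(1))
  have "rep ` I \<subseteq> P" using rep_in unfolding bucket_def by auto
  then show "finite I" "card I \<le> card P"
    using inj assms(2) by (auto intro: card_inj_on_le dest: finite_imageD finite_subset)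
qed

lemma RNN_inter_bucket_subset_nbhd:
  "RNN s P q \<inter> bucket s P \<epsilon> i \<subseteq> nbhd s (bucket s P \<epsilon> i) q ((1+\<epsilon>) powr real_of_int i)"
  unfolding RNN_def bucket_def nbhd_def by (auto simp: ls_dist_commute)

lemma (in prob_space) prob_Inter_ge_union_bound:
  fixes \<delta> :: real
  assumes "finite I" "\<And>i. i \<in> I \<Longrightarrow> A i \<in> events" "\<And>i. i \<in> I \<Longrightarrow> prob (A i) \<ge> 1 - \<delta>"
  shows "space M \<inter> (\<Inter>i\<in>I. A i) \<in> events"
    and "prob (space M \<inter> (\<Inter>i\<in>I. A i)) \<ge> 1 - card I * \<delta>"
proof -
  have compl: "space M \<inter> (\<Inter>i\<in>I. A i) = space M - (\<Union>i\<in>I. space M - A i)" by auto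
  show "space M \<inter> (\<Inter>i\<in>I. A i) \<in> events"
    unfolding compl using assms(1,2) by (intro sets.Diff sets.top sets.finite_UN) auto
  have "prob (\<Union>i\<in>I. space M - A i) \<le> (\<Sum>i\<in>I. prob (space M - A i))"
    using assms(1,2) by (intro finite_measure_subadditive_finite) auto
  also have "\<dots> \<le> (\<Sum>i\<in>I. \<delta>)"
    using assms(2,3) by (intro sum_mono) (fastforce simp: prob_compl)
  finally have "prob (\<Union>i\<in>I. space M - A i) \<le> card I * \<delta>" by simp
  moreover have "prob (space M - (\<Union>i\<in>I. space M - A i)) = 1 - prob (\<Union>i\<in>I. space M - A i)"
    using assms(1,2) by (intro prob_compl sets.finite_UN sets.Diff sets.top) auto
  ultimately show "prob (space M \<inter> (\<Inter>i\<in>I. A i)) \<ge> 1 - card I * \<delta>"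
    unfolding compl by simp
qed

theorem lemma6:
  fixes s \<epsilon> :: real and P :: "(real^'d) set" and q :: "real^'d"
    and M :: "'w measure"
    and y :: "'w \<Rightarrow> real^'d"
    and Out :: "int \<Rightarrow> 'w \<Rightarrow> (real^'d) set"
  assumes s: "0 < s" "s \<le> 2"
    and eps: "0 < \<epsilon>"
    and P: "finite P" "card P \<ge> 2"
    and M: "prob_space M"
    and y: "\<And>\<omega>. \<omega> \<in> space M \<Longrightarrow> y \<omega> \<in> P \<and> y \<omega> \<noteq> q"
    and pleb: "\<And>i. bucket s P \<epsilon> i \<noteq> {} \<Longrightarrow>
        {\<omega> \<in> space M. Out i \<omega> = nbhd s (bucket s P \<epsilon> i) q ((1+\<epsilon>) powr real_of_int i)} \<in> sets M
      \<and> measure M {\<omega> \<in> space M. Out i \<omega> = nbhd s (bucket s P \<epsilon> i) q ((1+\<epsilon>) powr real_of_int i)}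
          \<ge> 1 - 1 / (real (card P))^2"
  shows "\<exists>E \<in> sets M. measure M E \<ge> 1 - 1 / real (card P) \<and>
          (\<forall>\<omega> \<in> E.
             RNN s P q \<inter> (\<Union>i \<in> idx_range \<epsilon> (ls_dist s q (y \<omega>)). bucket s P \<epsilon> i)
             \<subseteq> (\<Union>i \<in> {i \<in> idx_range \<epsilon> (ls_dist s q (y \<omega>)). bucket s P \<epsilon> i \<noteq> {}}. Out i \<omega>))"
proof -
  interpret prob_space M by (rule M)
  define I where "I = {i. bucket s P \<epsilon> i \<noteq> {}}"
  define A where "A i = {\<omega> \<in> space M. Out i \<omega> = nbhd s (bucket s P \<epsilon> i) q ((1+\<epsilon>) powr real_of_int i)}" for i
  define E where "E = space M \<inter> (\<Inter>i\<in>I. A i)"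
  define n where "n = real (card P)"
  have I: "finite I" "card I \<le> n"
    using nonempty_buckets_finite_card_le[OF eps P(1)] unfolding I_def n_def by auto
  have A: "A i \<in> events" "prob (A i) \<ge> 1 - 1 / n^2" if "i \<in> I" for i
    using pleb that unfolding A_def I_def n_def by auto
  have "E \<in> events"
    unfolding E_def using I(1) A by (rule prob_Inter_ge_union_bound)
  moreover have "prob E \<ge> 1 - 1 / n"
  proof -
    have "prob E \<ge> 1 - card I * (1 / n^2)"
      unfolding E_def using I(1) A by (rule prob_Inter_ge_union_bound)
    moreover have "card I * (1 / n^2) \<le> 1 / n"
      using I(2) P(2) by (simp add: n_def power2_eq_square divide_simps)
    ultimately show ?thesis by linarith
  qed
  moreover have "RNN s P q \<inter> bucket s P \<epsilon> i \<subseteq> Out i \<omega>" if "\<omega> \<in> E" "i \<in> I" for \<omega> i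
    using that RNN_inter_bucket_subset_nbhd[of s P q \<epsilon> i] unfolding E_def A_def by auto
  ultimately show ?thesis
    unfolding n_def I_def by (intro bexI[of _ E]) blast+
qed

end
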